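(* Let $F:\mathbb{R}\to\mathbb{R}$ be smooth and $v:[0,1]\to\mathbb{R}$ smooth. For each $x\in[0,1]$ let $y(t,x)$ be the solution of $$\frac{d^2y(t,x)}{dt^2}=F(y(t,x)),\quad y(0,x)=x,\quad \frac{dy(0,x)}{dt}=v(x),$$ assumed to exist and be unique for all $t\in[0,\infty)$. Put $U(y)=-\int_0^yF(z)\,dz$ and $H_0(x)=\frac{v(x)^2}{2}+U(x)$. For $x\in[0,1]$ and $y\ge x$ let $T(x,y)$ be the first time moment at which $y(t,x)=y$. Assume: (i) $v(x)>0$ for all $x\in[0,1]$; (ii) $H_0(x)-U(y)>0$ for all $x\in[0,1]$ and all $y\ge x$. Then the following conditions are equivalent: 1) there are no collisions on $[0,\infty)$, i.e. $y(t,x)\neq y(t,x')$ for all $t\ge 0$ and all $x\neq x'$ in $[0,1]$; 2) for every $y>0$, the function $x\mapsto T(x,y)$ is strictly decreasing on $[0,\min\{y,1\}]$; 3) for every $y>0$ and every $x\in[0,\min\{y,1\}]$, $$\frac{1}{v(x)}+\frac{v(x)v'(x)-F(x)}{2\sqrt2}\int_x^y\frac{dz}{(H_0(x)-U(z))^{3/2}}\ge 0,$$ where equality can hold only on a discrete set of points.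
   Context: This concerns a one-dimensional continuum of non-interacting point particles: each point $x\in[0,1]$ is a particle with initial position $x$ and initial velocity $v(x)$, moving independently under the external force $F$ (unit mass). *)

theory Defs
  imports "HOL-Analysis.Analysis"
begin

definition smooth_on :: "real set \<Rightarrow> (real \<Rightarrow> real) \<Rightarrow> bool" where
  "smooth_on S f \<longleftrightarrow> (\<exists>D :: nat \<Rightarrow> real \<Rightarrow> real. (\<forall>x\<in>S. D 0 x = f x) \<and>
      (\<forall>n. \<forall>x\<in>S. (D n has_real_derivative D (Suc n) x) (at x within S)))"

definition oint :: "(real \<Rightarrow> real) \<Rightarrow> real \<Rightarrow> real \<Rightarrow> real" where
  "oint f a b = (if a \<le> b then integral {a..b} f else - integral {b..a} f)"

definition potU :: "(real \<Rightarrow> real) \<Rightarrow> real \<Rightarrow> real" where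
  "potU F y = - oint F 0 y"

definition energy0 :: "(real \<Rightarrow> real) \<Rightarrow> (real \<Rightarrow> real) \<Rightarrow> real \<Rightarrow> real" where
  "energy0 F v x = (v x)^2 / 2 + potU F x"

text \<open>First time moment t \<ge> 0 at which the particle started at x is at position p,
  where traj t x is the position at time t of the particle with initial position x.\<close>
definition first_time :: "(real \<Rightarrow> real \<Rightarrow> real) \<Rightarrow> real \<Rightarrow> real \<Rightarrow> real" where
  "first_time traj x p = Inf {t. 0 \<le> t \<and> traj t x = p}"

end

theory Submission
  imports Defs
begin

text \<open>Energy is conserved along each trajectory, and hypothesis (ii) keeps the kinetic energy
  positive to the right of the starting point. Hence every particle moves strictly to the right
  and reaches each \<open>p \<ge> x\<close> exactly once, at the time
  \<open>T(x,p) = \<integral>\<^sub>x\<^sup>p dz / sqrt (2 (H\<^sub>0(x) - U(z)))\<close>.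
  By the intermediate value theorem two particles collide iff their arrival times at some point
  are in the wrong order, which gives 1) \<open>\<Leftrightarrow>\<close> 2). Differentiating under the integral sign
  shows that \<open>\<partial>\<^sub>x T(x,p)\<close> is minus the expression of condition 3). That expression is affine
  in an integral which grows strictly with \<open>p\<close>, so if it is nonnegative for all \<open>p\<close> it is in fact
  positive; this gives 2) \<open>\<Leftrightarrow>\<close> 3).\<close>

lemma smooth_on_imp_continuous_on:
  assumes "smooth_on S f"
  shows "continuous_on S f"
proof -
  obtain D :: "nat \<Rightarrow> real \<Rightarrow> real" where D0: "\<And>x. x \<in> S \<Longrightarrow> D 0 x = f x"
    and D: "\<And>x. x \<in> S \<Longrightarrow> (D 0 has_real_derivative D 1 x) (at x within S)"
    using assms unfolding smooth_on_def by (metis One_nat_def)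
  have "continuous_on S (D 0)"
    using D by (intro DERIV_continuous_on) blast
  then show ?thesis
    using D0 by (rule continuous_on_eq)
qed

lemma has_real_derivative_pos_imp_less:
  fixes f f' :: "real \<Rightarrow> real"
  assumes "a < b"
    and "\<And>s. s \<in> {a..b} \<Longrightarrow> (f has_real_derivative f' s) (at s within {a..b})"
    and "\<And>s. s \<in> {a<..<b} \<Longrightarrow> 0 < f' s"
  shows "f a < f b"
proof -
  have "\<And>s. a \<le> s \<Longrightarrow> s \<le> b \<Longrightarrow> (f has_derivative (\<lambda>h. f' s * h)) (at s within {a..b})"
    using assms(2) unfolding has_field_derivative_def by auto
  then obtain \<xi> where "\<xi> \<in> {a<..<b}" "f b - f a = f' \<xi> * (b - a)"
    using mvt_simple[of a b f "\<lambda>s h. f' s * h"] assms(1) by blast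
  moreover have "0 < f' \<xi> * (b - a)"
    using assms(1,3) \<open>\<xi> \<in> {a<..<b}\<close> by simp
  ultimately show ?thesis by linarith
qed

lemma has_real_derivative_nonpos_if_antimono:
  fixes f :: "real \<Rightarrow> real"
  assumes "a < b" and x: "x \<in> {a..b}"
    and anti: "\<And>s t. s \<in> {a..b} \<Longrightarrow> t \<in> {a..b} \<Longrightarrow> s \<le> t \<Longrightarrow> f t \<le> f s"
    and "(f has_real_derivative D) (at x within {a..b})"
  shows "D \<le> 0"
proof (rule tendsto_upperbound)
  show "((\<lambda>z. (f z - f x) / (z - x)) \<longlongrightarrow> D) (at x within {a..b})"
    using assms(4) by (simp add: has_field_derivative_iff)
  show "\<forall>\<^sub>F z in at x within {a..b}. (f z - f x) / (z - x) \<le> 0"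
    unfolding eventually_at_filter
  proof (intro always_eventually allI impI)
    fix z assume "z \<noteq> x" "z \<in> {a..b}"
    then consider "z < x" | "x < z"
      by linarith
    then show "(f z - f x) / (z - x) \<le> 0"
      by cases (use anti[of z x] anti[of x z] x \<open>z \<in> {a..b}\<close> in \<open>auto simp: divide_le_0_iff\<close>)
  qed
  show "at x within {a..b} \<noteq> bot"
    using assms(1,2) by (simp add: trivial_limit_within islimpt_Icc)
qed

lemma continuous_on_first_zero:
  fixes f :: "real \<Rightarrow> real"
  assumes cont: "continuous_on {a..b} f" and "a \<le> b" and pos: "0 < f a" and "f b \<le> 0"
  obtains t where "t \<in> {a<..b}" "f t = 0" "\<And>s. s \<in> {a..<t} \<Longrightarrow> 0 < f s"
proof -
  define Z where "Z = {s \<in> {a..b}. f s = 0}"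
  have "Z \<noteq> {}"
    using IVT2'[of f b 0 a, OF _ _ \<open>a \<le> b\<close> cont] assms unfolding Z_def by force
  moreover have "closed Z"
    unfolding Z_def by (rule continuous_closed_preimage_constant[OF cont]) simp
  moreover have "bdd_below Z"
    unfolding Z_def by (auto intro: bdd_belowI[of _ a])
  ultimately have "Inf Z \<in> Z"
    by (intro closed_contains_Inf)
  moreover have "0 < f s" if s: "s \<in> {a..<Inf Z}" for s
  proof (rule ccontr)
    assume "\<not> 0 < f s"
    then obtain s' where "s' \<in> {a..s}" "f s' = 0"
      using IVT2'[of f s 0 a] pos s continuous_on_subset[OF cont, of "{a..s}"] \<open>Inf Z \<in> Z\<close>
      unfolding Z_def by force
    moreover have "s' \<in> Z"
      using \<open>s' \<in> {a..s}\<close> \<open>f s' = 0\<close> s \<open>Inf Z \<in> Z\<close> unfolding Z_def by auto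
    ultimately have "Inf Z \<le> s'"
      using \<open>bdd_below Z\<close> by (auto intro: cInf_lower)
    then show False using \<open>s' \<in> {a..s}\<close> s by simp
  qed
  moreover have "Inf Z \<noteq> a"
    using \<open>Inf Z \<in> Z\<close> pos unfolding Z_def by auto
  ultimately show ?thesis
    using that[of "Inf Z"] unfolding Z_def by force
qed

lemma integral_pos_if_continuous_pos:
  fixes f :: "real \<Rightarrow> real"
  assumes "a < b" and f: "continuous_on {a..b} f" and pos: "\<And>z. z \<in> {a..b} \<Longrightarrow> 0 < f z"
  shows "0 < integral {a..b} f"
proof -
  obtain zm where zm: "zm \<in> {a..b}" "\<And>z. z \<in> {a..b} \<Longrightarrow> f zm \<le> f z"
    using continuous_attains_inf[OF compact_Icc _ f] \<open>a < b\<close> by auto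
  have "integral {a..b} (\<lambda>z. f zm) \<le> integral {a..b} f"
    by (rule integral_le) (use zm integrable_continuous_real[OF f] in auto)
  then have "(b - a) * f zm \<le> integral {a..b} f"
    using \<open>a < b\<close> by simp
  moreover have "0 < (b - a) * f zm"
    using pos[OF zm(1)] \<open>a < b\<close> by simp
  ultimately show ?thesis
    by linarith
qed

lemma oint_eq_integral_diff:
  fixes f :: "real \<Rightarrow> real"
  assumes "\<And>s t. f integrable_on {s..t}" and "c \<le> a" "c \<le> b"
  shows "oint f a b = integral {c..b} f - integral {c..a} f"
proof (cases "a \<le> b")
  case True
  then show ?thesis
    using Henstock_Kurzweil_Integration.integral_combine[OF \<open>c \<le> a\<close> True assms(1)]
    by (simp add: oint_def)
next
  case False
  then show ?thesis
    using Henstock_Kurzweil_Integration.integral_combine[OF \<open>c \<le> b\<close> _ assms(1), of a]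
    by (simp add: oint_def)
qed

lemma potU_has_real_derivative:
  assumes F: "continuous_on UNIV F"
  shows "(potU F has_real_derivative - F x) (at x)"
proof -
  define c where "c = - \<bar>x\<bar> - 1"
  have c: "c < x" "c \<le> 0"
    unfolding c_def by auto
  have F_int: "F integrable_on {s..t}" for s t
    using F by (simp add: integrable_continuous_real continuous_on_subset)
  have "((\<lambda>u. integral {c..u} F) has_real_derivative F x) (at x within {c..x+1})"
    by (rule integral_has_real_derivative) (use F c in \<open>auto intro: continuous_on_subset\<close>)
  then have "((\<lambda>u. integral {c..u} F) has_real_derivative F x) (at x)"
    using at_within_Icc_at[of c x "x+1"] c by simp
  then have "((\<lambda>u. - (integral {c..u} F - integral {c..0} F)) has_real_derivative - F x) (at x)"
    by (auto intro!: derivative_eq_intros)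
  then show ?thesis
    by (rule has_field_derivative_transform_within_open[of _ _ _ "{c<..}"])
       (use c in \<open>auto simp: potU_def oint_eq_integral_diff[OF F_int]\<close>)
qed

text \<open>The reciprocal speed of a unit mass with kinetic energy \<open>w\<close>.\<close>
definition slowness :: "real \<Rightarrow> real" where
  "slowness w = 1 / sqrt (2 * w)"

lemma slowness_has_real_derivative:
  assumes w: "0 < w"
  shows "(slowness has_real_derivative - (1 / (2 * sqrt 2)) * (1 / w powr (3/2))) (at w)"
proof -
  have "(slowness has_real_derivative - (inverse (sqrt (2 * w)) / 2 * 2) / (sqrt (2 * w))^2) (at w)"
    unfolding slowness_def using w by (auto intro!: derivative_eq_intros simp: field_simps)
  moreover have "w powr (3/2) = w * sqrt w"
    using w by (simp add: powr_add[of w 1 "1/2", simplified] powr_half_sqrt)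
  moreover have "(sqrt (2 * w))^2 = 2 * w"
    using w by simp
  moreover have "sqrt (2 * w) = sqrt 2 * sqrt w"
    by (rule real_sqrt_mult)
  ultimately show ?thesis
    using w by (simp add: divide_simps ac_simps)
qed

lemma continuous_on_slowness [continuous_intros]:
  "continuous_on S f \<Longrightarrow> (\<And>q. q \<in> S \<Longrightarrow> 0 < f q) \<Longrightarrow> continuous_on S (\<lambda>q. slowness (f q))"
  unfolding slowness_def by (intro continuous_intros) force+

lemma continuous_pos_on_Icc_extends_left:
  fixes g :: "real \<Rightarrow> real"
  assumes g: "continuous_on UNIV g" and "a \<le> b" and pos: "\<And>z. z \<in> {a..b} \<Longrightarrow> 0 < g z"
  obtains c m where "c < a" "0 < m" "\<And>z. z \<in> {c..b} \<Longrightarrow> m < g z"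
proof -
  have "isCont g a" "0 < g a"
    using g pos[of a] \<open>a \<le> b\<close> by (simp_all add: continuous_on_eq_continuous_at)
  then obtain \<delta> where "0 < \<delta>" and \<delta>: "\<And>z. dist z a < \<delta> \<Longrightarrow> dist (g z) (g a) < g a"
    unfolding continuous_at_eps_delta by blast
  define c where "c = a - \<delta> / 2"
  have gc: "0 < g z" if "z \<in> {c..b}" for z
  proof (cases "a \<le> z")
    case False
    then have "dist z a < \<delta>"
      using that \<open>0 < \<delta>\<close> by (auto simp: c_def dist_real_def)
    then show ?thesis
      using \<delta> by (force simp: dist_real_def)
  qed (use pos that in auto)
  have "{c..b} \<noteq> {}"
    using \<open>a \<le> b\<close> \<open>0 < \<delta>\<close> by (simp add: c_def)
  then obtain zm where zm: "zm \<in> {c..b}" "\<And>z. z \<in> {c..b} \<Longrightarrow> g zm \<le> g z"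
    using continuous_attains_inf[OF compact_Icc _ continuous_on_subset[OF g]] by blast
  show ?thesis
  proof
    show "c < a" "0 < g zm / 2"
      using \<open>0 < \<delta>\<close> gc[OF zm(1)] by (auto simp: c_def)
    show "g zm / 2 < g z" if "z \<in> {c..b}" for z
      using zm(2)[OF that] gc[OF zm(1)] by simp
  qed
qed

lemma has_derivative_integral_lower_param:
  fixes G G' :: "real \<Rightarrow> real \<Rightarrow> real"
  assumes X: "convex X" "h0 \<in> X" and a0: "a0 \<in> {c..p}"
    and G: "continuous_on (X \<times> {c..p}) (\<lambda>(h, z). G h z)"
    and G': "continuous_on (X \<times> {c..p}) (\<lambda>(h, z). G' h z)"
    and dG: "\<And>h z. h \<in> X \<Longrightarrow> z \<in> {c..p} \<Longrightarrow>
      ((\<lambda>h. G h z) has_real_derivative G' h z) (at h within X)"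
  shows "((\<lambda>(h, a). integral {a..p} (G h)) has_derivative
           (\<lambda>(dh, da). integral {a0..p} (G' h0) * dh - G h0 a0 * da))
         (at (h0, a0) within X \<times> {c..p})"
proof -
  have G_slice: "continuous_on {c..p} (G h)" if "h \<in> X" for h
  proof -
    have "continuous_on {c..p} (\<lambda>z. (\<lambda>(h, z). G h z) (h, z))"
      by (rule continuous_on_compose2[OF G]) (use that in \<open>auto intro!: continuous_intros\<close>)
    then show ?thesis by simp
  qed
  have d_h: "((\<lambda>h. integral {a0..p} (G h)) has_real_derivative integral {a0..p} (G' h0))
      (at h0 within X)"
  proof -
    have "((\<lambda>h. integral (cbox a0 p) (G h)) has_real_derivative integral (cbox a0 p) (G' h0))
        (at h0 within X)"
    proof (rule leibniz_rule_field_derivative)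
      show "((\<lambda>h. G h t) has_real_derivative G' h t) (at h within X)"
        if "h \<in> X" "t \<in> cbox a0 p" for h t
        using dG that a0 by simp
      show "G h integrable_on cbox a0 p" if "h \<in> X" for h
        using continuous_on_subset[OF G_slice[OF that], of "{a0..p}"] a0
        by (simp add: integrable_continuous_real)
      show "continuous_on (X \<times> cbox a0 p) (\<lambda>(h, t). G' h t)"
        by (rule continuous_on_subset[OF G']) (use a0 in auto)
    qed (use X in auto)
    then show ?thesis
      by (simp add: cbox_interval)
  qed
  have d_a: "((\<lambda>a. integral {a..p} (G h)) has_derivative
      blinfun_apply (blinfun_mult_right (- G h a))) (at a within {c..p})"
    if h: "h \<in> X" and a: "a \<in> {c..p}" for h a
  proof -
    have "((\<lambda>a. integral {c..p} (G h) - integral {c..a} (G h)) has_real_derivative - G h a)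
        (at a within {c..p})"
      using integral_has_real_derivative[OF G_slice[OF h] a] by (auto intro!: derivative_eq_intros)
    then have "((\<lambda>a. integral {a..p} (G h)) has_real_derivative - G h a) (at a within {c..p})"
    proof (rule has_field_derivative_transform_within[OF _ zero_less_one a])
      fix a' assume "a' \<in> {c..p}"
      then show "integral {c..p} (G h) - integral {c..a'} (G h) = integral {a'..p} (G h)"
        using Henstock_Kurzweil_Integration.integral_combine[of c a' p "G h"]
          integrable_continuous_real[OF G_slice[OF h]] by auto
    qed
    then show ?thesis
      by (simp add: has_field_derivative_eq_has_derivative_blinfun)
  qed
  have "continuous_on (X \<times> {c..p}) (\<lambda>(h, a). blinfun_mult_right (- G h a))"
    using G by (auto intro!: continuous_intros simp: split_beta')
  then have cont_a: "continuous (at (h0, a0) within X \<times> {c..p}) (\<lambda>(h, a). blinfun_mult_right (- G h a))"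
    using X(2) a0 by (simp add: continuous_on_eq_continuous_within)
  show ?thesis
    using has_derivative_partialsI[OF d_h[unfolded has_field_derivative_def] d_a cont_a a0]
    by (simp add: algebra_simps)
qed

lemma has_derivative_compose_graph:
  fixes \<Psi> :: "real \<Rightarrow> real \<Rightarrow> real" and H :: "real \<Rightarrow> real"
  assumes \<Psi>: "((\<lambda>(h, a). \<Psi> h a) has_derivative L) (at (H x0, x0) within X \<times> K)"
    and H: "(H has_real_derivative H') (at x0 within S)"
    and X: "open X" "H x0 \<in> X"
    and V: "open V" "x0 \<in> V" "S \<inter> V \<subseteq> K"
  shows "((\<lambda>x. \<Psi> (H x) x) has_derivative (\<lambda>t. L (H' * t, t))) (at x0 within S)"
proof -
  obtain N where N: "open N" "x0 \<in> N" "\<And>x. x \<in> S \<Longrightarrow> x \<in> N \<Longrightarrow> H x \<in> X"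
    using DERIV_continuous[OF H] X unfolding continuous_within_topological by metis
  define S' where "S' = S \<inter> (N \<inter> V)"
  have dpair: "((\<lambda>x. (H x, x)) has_derivative (\<lambda>t. (H' * t, t))) (at x0 within S')"
    using has_field_derivative_subset[OF H, of S'] unfolding S'_def has_field_derivative_def
    by (auto intro!: has_derivative_Pair has_derivative_ident)
  have "(\<lambda>x. (H x, x)) ` S' \<subseteq> X \<times> K"
    using N V unfolding S'_def by auto
  then have "((\<lambda>(h, a). \<Psi> h a) has_derivative L) (at (H x0, x0) within (\<lambda>x. (H x, x)) ` S')"
    by (rule has_derivative_subset[OF \<Psi>])
  then have "((\<lambda>x. \<Psi> (H x) x) has_derivative (\<lambda>t. L (H' * t, t))) (at x0 within S')"
    using diff_chain_within[OF dpair] by (fastforce simp: o_def)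
  moreover have "at x0 within S = at x0 within S'"
    by (rule at_within_nhd[of _ "N \<inter> V"]) (use N V in \<open>auto simp: S'_def\<close>)
  ultimately show ?thesis
    by simp
qed

locale particle_flow =
  fixes F v v' :: "real \<Rightarrow> real"
    and y y' :: "real \<Rightarrow> real \<Rightarrow> real"
  assumes F_cont: "continuous_on UNIV F"
    and v'_deriv: "\<And>x. x \<in> {0..1} \<Longrightarrow> (v has_real_derivative v' x) (at x within {0..1})"
    and y_init: "\<And>x. x \<in> {0..1} \<Longrightarrow> y 0 x = x"
    and y'_init: "\<And>x. x \<in> {0..1} \<Longrightarrow> y' 0 x = v x"
    and y_deriv: "\<And>x t. x \<in> {0..1} \<Longrightarrow> 0 \<le> t \<Longrightarrow>
        ((\<lambda>s. y s x) has_real_derivative y' t x) (at t within {0..})"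
    and y'_deriv: "\<And>x t. x \<in> {0..1} \<Longrightarrow> 0 \<le> t \<Longrightarrow>
        ((\<lambda>s. y' s x) has_real_derivative F (y t x)) (at t within {0..})"
    and v_pos: "\<And>x. x \<in> {0..1} \<Longrightarrow> v x > 0"
    and energy_pos: "\<And>x p. x \<in> {0..1} \<Longrightarrow> x \<le> p \<Longrightarrow> energy0 F v x - potU F p > 0"
begin

abbreviation "U \<equiv> potU F"
abbreviation "H \<equiv> energy0 F v"

lemma U_deriv: "(U has_real_derivative - F z) (at z)"
  using F_cont by (rule potU_has_real_derivative)

lemma continuous_on_U [continuous_intros]: "continuous_on S f \<Longrightarrow> continuous_on S (\<lambda>q. U (f q))"
  by (rule continuous_on_compose2[of UNIV])
     (auto intro: continuous_at_imp_continuous_on DERIV_isCont[OF U_deriv])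

lemma H_deriv:
  assumes "x \<in> {0..1}"
  shows "(H has_real_derivative v x * v' x - F x) (at x within {0..1})"
  unfolding energy0_def[abs_def]
  using v'_deriv[OF assms] has_field_derivative_at_within[OF U_deriv]
  by (auto intro!: derivative_eq_intros)

lemma energy_conservation:
  assumes x: "x \<in> {0..1}" and "0 \<le> t"
  shows "(y' t x)^2 / 2 + U (y t x) = H x"
proof -
  have "\<exists>c. \<forall>s\<in>{0..}. (y' s x)^2 / 2 + U (y s x) = c"
  proof (rule has_field_derivative_zero_constant)
    fix s :: real assume "s \<in> {0..}"
    then show "((\<lambda>s. (y' s x)^2 / 2 + U (y s x)) has_real_derivative 0) (at s within {0..})"
      using y'_deriv[OF x] DERIV_chain2[OF U_deriv y_deriv[OF x]]
      by (auto intro!: derivative_eq_intros)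
  qed simp
  then obtain c where c: "\<And>s. s \<in> {0..} \<Longrightarrow> (y' s x)^2 / 2 + U (y s x) = c"
    by blast
  show ?thesis
    using c[of 0] c[of t] \<open>0 \<le> t\<close> y_init[OF x] y'_init[OF x] by (simp add: energy0_def)
qed

lemma y_continuous: "x \<in> {0..1} \<Longrightarrow> continuous_on {0..} (\<lambda>s. y s x)"
  by (rule DERIV_continuous_on[of _ _ "\<lambda>t. y' t x"]) (auto intro: y_deriv)

lemma y'_continuous: "x \<in> {0..1} \<Longrightarrow> continuous_on {0..} (\<lambda>s. y' s x)"
  by (rule DERIV_continuous_on[of _ _ "\<lambda>t. F (y t x)"]) (auto intro: y'_deriv)

lemma y_less_of_velocity_pos:
  assumes x: "x \<in> {0..1}" and "0 \<le> s" "s < t" and pos: "\<And>r. r \<in> {s<..<t} \<Longrightarrow> 0 < y' r x"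
  shows "y s x < y t x"
proof (rule has_real_derivative_pos_imp_less[OF \<open>s < t\<close> _ pos])
  fix r assume "r \<in> {s..t}"
  then show "((\<lambda>s. y s x) has_real_derivative y' r x) (at r within {s..t})"
    using y_deriv[OF x, of r] \<open>0 \<le> s\<close> by (auto intro: has_field_derivative_subset)
qed

text \<open>The velocity cannot vanish: at its first zero the particle would be to the right of its
  start, where hypothesis \<open>energy_pos\<close> leaves it positive kinetic energy.\<close>
lemma velocity_pos:
  assumes x: "x \<in> {0..1}" and "0 \<le> t"
  shows "0 < y' t x"
proof (rule ccontr)
  assume "\<not> 0 < y' t x"
  moreover have "continuous_on {0..t} (\<lambda>s. y' s x)"
    by (rule continuous_on_subset[OF y'_continuous[OF x]]) auto
  ultimately obtain t0 where t0: "t0 \<in> {0<..t}" "y' t0 x = 0"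
    and before: "\<And>s. s \<in> {0..<t0} \<Longrightarrow> 0 < y' s x"
    using continuous_on_first_zero[of 0 t "\<lambda>s. y' s x"] \<open>0 \<le> t\<close> y'_init[OF x] v_pos[OF x]
    by (metis not_less)
  have "x < y t0 x"
    using y_less_of_velocity_pos[OF x, of 0 t0] t0 before y_init[OF x] by simp
  then show False
    using energy_conservation[OF x, of t0] energy_pos[OF x, of "y t0 x"] t0 by simp
qed

lemma y_strict_mono: "x \<in> {0..1} \<Longrightarrow> 0 \<le> s \<Longrightarrow> s < t \<Longrightarrow> y s x < y t x"
  by (rule y_less_of_velocity_pos) (auto intro: velocity_pos)

lemma y_mono: "x \<in> {0..1} \<Longrightarrow> 0 \<le> s \<Longrightarrow> s \<le> t \<Longrightarrow> y s x \<le> y t x"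
  using y_strict_mono[of x s t] by (cases "s = t") auto

lemma y_ge_start: "x \<in> {0..1} \<Longrightarrow> 0 \<le> t \<Longrightarrow> x \<le> y t x"
  using y_mono[of x 0 t] y_init[of x] by simp

definition transit_time :: "real \<Rightarrow> real \<Rightarrow> real" where
  "transit_time x p = integral {x..p} (\<lambda>z. slowness (H x - U z))"

lemma U_less_H: "x \<in> {0..1} \<Longrightarrow> x \<le> z \<Longrightarrow> U z < H x"
  using energy_pos by force

lemma transit_integrand_continuous:
  "x \<in> {0..1} \<Longrightarrow> continuous_on {x..b} (\<lambda>z. slowness (H x - U z))"
  by (intro continuous_intros) (auto intro!: U_less_H)

lemma transit_integrand_integrable:
  "x \<in> {0..1} \<Longrightarrow> (\<lambda>z. slowness (H x - U z)) integrable_on {x..b}"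
  by (rule integrable_continuous_real[OF transit_integrand_continuous])

lemma transit_integrand_nonneg: "x \<in> {0..1} \<Longrightarrow> z \<in> {x..b} \<Longrightarrow> 0 \<le> slowness (H x - U z)"
  using U_less_H[of x z] by (simp add: slowness_def)

lemma transit_time_nonneg: "x \<in> {0..1} \<Longrightarrow> 0 \<le> transit_time x p"
  unfolding transit_time_def
  by (rule integral_nonneg[OF transit_integrand_integrable transit_integrand_nonneg])

text \<open>By energy conservation the integrand equals \<open>1 / y'\<close> along the trajectory, so
  \<open>transit_time x\<close> inverts \<open>\<lambda>t. y t x\<close>.\<close>
lemma transit_time_y:
  assumes x: "x \<in> {0..1}" and "0 \<le> T"
  shows "transit_time x (y T x) = T"
proof -
  have "\<exists>c. \<forall>s\<in>{0..T}. transit_time x (y s x) - s = c"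
  proof (rule has_field_derivative_zero_constant)
    fix s assume s: "s \<in> {0..T}"
    have img: "(\<lambda>s. y s x) ` {0..T} \<subseteq> {x..y T x}"
      using \<open>0 \<le> T\<close> by (auto intro!: y_ge_start[OF x] y_mono[OF x])
    have "(transit_time x has_real_derivative slowness (H x - U (y s x))) (at (y s x) within {x..y T x})"
      unfolding transit_time_def
      by (rule integral_has_real_derivative[OF transit_integrand_continuous[OF x]]) (use img s in blast)
    moreover have "((\<lambda>s. y s x) has_real_derivative y' s x) (at s within {0..T})"
      using y_deriv[OF x, of s] s by (auto intro: has_field_derivative_subset)
    ultimately have "((\<lambda>s. transit_time x (y s x)) has_real_derivative
        slowness (H x - U (y s x)) * y' s x) (at s within {0..T})"
      using DERIV_image_chain[OF has_field_derivative_subset[OF _ img]] by (simp add: o_def)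
    moreover have "slowness (H x - U (y s x)) * y' s x = 1"
    proof -
      have kinetic: "H x - U (y s x) = (y' s x)^2 / 2"
        using energy_conservation[OF x, of s] s by simp
      show ?thesis
        unfolding slowness_def kinetic using velocity_pos[OF x, of s] s by simp
    qed
    ultimately show "((\<lambda>s. transit_time x (y s x) - s) has_real_derivative 0) (at s within {0..T})"
      by (auto intro!: derivative_eq_intros)
  qed simp
  then obtain c where c: "\<And>s. s \<in> {0..T} \<Longrightarrow> transit_time x (y s x) - s = c"
    by blast
  show ?thesis
    using c[of 0] c[of T] \<open>0 \<le> T\<close> y_init[OF x] by (simp add: transit_time_def)
qed

lemma y_reaches:
  assumes x: "x \<in> {0..1}" and "x \<le> p"
  shows "\<exists>t\<ge>0. y t x = p"
proof (rule ccontr)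
  assume miss: "\<not> ?thesis"
  define t where "t = transit_time x p + 1"
  have "0 \<le> t"
    using transit_time_nonneg[OF x, of p] by (simp add: t_def)
  have "y t x < p"
  proof (rule ccontr)
    assume "\<not> y t x < p"
    then obtain s where "0 \<le> s" "y s x = p"
      using IVT'[of "\<lambda>s. y s x" 0 p t] continuous_on_subset[OF y_continuous[OF x], of "{0..t}"]
        y_init[OF x] \<open>x \<le> p\<close> \<open>0 \<le> t\<close> by force
    then show False
      using miss by blast
  qed
  then have "transit_time x (y t x) \<le> transit_time x p"
    unfolding transit_time_def
    by (intro integral_subset_le transit_integrand_integrable[OF x])
       (use y_ge_start[OF x \<open>0 \<le> t\<close>] in \<open>auto intro: transit_integrand_nonneg[OF x]\<close>)
  then show False
    using transit_time_y[OF x \<open>0 \<le> t\<close>] by (simp add: t_def)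
qed

lemma first_time_eq_transit_time:
  assumes x: "x \<in> {0..1}" and "x \<le> p"
  shows "first_time y x p = transit_time x p"
proof -
  have "t = transit_time x p" if "0 \<le> t" "y t x = p" for t
    using transit_time_y[OF x that(1)] that(2) by simp
  then have "{t. 0 \<le> t \<and> y t x = p} = {transit_time x p}"
    using y_reaches[OF assms] by auto
  then show ?thesis
    by (simp add: first_time_def)
qed

lemma y_transit_time: "x \<in> {0..1} \<Longrightarrow> x \<le> p \<Longrightarrow> y (transit_time x p) x = p"
  using y_reaches transit_time_y by metis

lemma first_time_y: "x \<in> {0..1} \<Longrightarrow> 0 \<le> t \<Longrightarrow> first_time y x (y t x) = t"
  using first_time_eq_transit_time transit_time_y y_ge_start by simp

lemma first_time_less_iff:
  "x \<in> {0..min p 1} \<Longrightarrow> x' \<in> {0..min p 1} \<Longrightarrow>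
    first_time y x' p < first_time y x p \<longleftrightarrow> transit_time x' p < transit_time x p"
  by (simp add: first_time_eq_transit_time)

lemma transit_time_less_if_no_collision:
  assumes no_coll: "\<And>t x x'. 0 \<le> t \<Longrightarrow> x \<in> {0..1} \<Longrightarrow> x' \<in> {0..1} \<Longrightarrow> x < x' \<Longrightarrow>
      y t x \<noteq> y t x'"
    and x: "x \<in> {0..1}" "x \<le> p" and x': "x' \<in> {0..1}" "x' \<le> p" and "x < x'"
  shows "transit_time x' p < transit_time x p"
proof (rule ccontr)
  assume "\<not> transit_time x' p < transit_time x p"
  define t where "t = transit_time x p"
  have "0 \<le> t" "y t x = p"
    using transit_time_nonneg[OF x(1)] y_transit_time[OF x] by (simp_all add: t_def)
  have "y t x' \<le> y (transit_time x' p) x'"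
    using y_mono[OF x'(1) \<open>0 \<le> t\<close>] \<open>\<not> _ < _\<close> by (simp add: t_def)
  then have "y t x' \<le> p"
    using y_transit_time[OF x'] by simp
  moreover have "y t x' \<noteq> p"
    using no_coll[OF \<open>0 \<le> t\<close> x(1) x'(1) \<open>x < x'\<close>] \<open>y t x = p\<close> by simp
  ultimately have "y t x' - y t x < 0"
    using \<open>y t x = p\<close> by simp
  moreover have "0 < y 0 x' - y 0 x"
    using y_init[OF x(1)] y_init[OF x'(1)] \<open>x < x'\<close> by simp
  moreover have "continuous_on {0..t} (\<lambda>s. y s x' - y s x)"
    using y_continuous[OF x(1)] y_continuous[OF x'(1)]
    by (auto intro!: continuous_intros intro: continuous_on_subset)
  ultimately obtain s where "0 \<le> s" "y s x' - y s x = 0"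
    using IVT2'[of "\<lambda>s. y s x' - y s x" t 0 0] \<open>0 \<le> t\<close> by force
  then show False
    using no_coll[OF _ x(1) x'(1) \<open>x < x'\<close>] by force
qed

lemma no_collision_iff_first_time_decreasing:
  "(\<forall>t\<ge>0. \<forall>x\<in>{0..1}. \<forall>x'\<in>{0..1}. x \<noteq> x' \<longrightarrow> y t x \<noteq> y t x')
   \<longleftrightarrow> (\<forall>p>0. \<forall>x\<in>{0..min p 1}. \<forall>x'\<in>{0..min p 1}. x < x' \<longrightarrow>
          first_time y x' p < first_time y x p)"
proof
  assume "\<forall>t\<ge>0. \<forall>x\<in>{0..1}. \<forall>x'\<in>{0..1}. x \<noteq> x' \<longrightarrow> y t x \<noteq> y t x'"
  then have "transit_time x' p < transit_time x p"
    if "x \<in> {0..min p 1}" "x' \<in> {0..min p 1}" "x < x'" for p x x'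
    using that by (intro transit_time_less_if_no_collision) auto
  then show "\<forall>p>0. \<forall>x\<in>{0..min p 1}. \<forall>x'\<in>{0..min p 1}. x < x' \<longrightarrow>
      first_time y x' p < first_time y x p"
    by (simp add: first_time_less_iff)
next
  assume dec: "\<forall>p>0. \<forall>x\<in>{0..min p 1}. \<forall>x'\<in>{0..min p 1}. x < x' \<longrightarrow>
      first_time y x' p < first_time y x p"
  have "y t a \<noteq> y t b" if "0 \<le> t" "a \<in> {0..1}" "b \<in> {0..1}" "a < b" for t a b
  proof
    assume meet: "y t a = y t b"
    have "first_time y b (y t b) < first_time y a (y t b)"
      using dec y_ge_start[OF that(3,1)] that by auto
    then show False
      using first_time_y[OF that(2,1)] first_time_y[OF that(3,1)] meet by simp
  qed
  then show "\<forall>t\<ge>0. \<forall>x\<in>{0..1}. \<forall>x'\<in>{0..1}. x \<noteq> x' \<longrightarrow> y t x \<noteq> y t x'"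
    by (metis linorder_neqE_linordered_idom)
qed

definition neg_transit_time_deriv :: "real \<Rightarrow> real \<Rightarrow> real" where
  "neg_transit_time_deriv x p = 1 / v x + (v x * v' x - F x) / (2 * sqrt 2) *
     integral {x..p} (\<lambda>z. 1 / (H x - U z) powr (3/2))"

lemma slowness_integral_has_derivative:
  assumes x0: "x0 \<in> {0..1}" "x0 \<le> p"
  obtains X c where "open X" "H x0 \<in> X" "c < x0"
    "((\<lambda>(h, a). integral {a..p} (\<lambda>z. slowness (h - U z))) has_derivative
       (\<lambda>(dh, da). integral {x0..p} (\<lambda>z. - (1 / (2 * sqrt 2)) * (1 / (H x0 - U z) powr (3/2))) * dh
          - slowness (H x0 - U x0) * da))
     (at (H x0, x0) within X \<times> {c..p})"
proof -
  obtain c m where "c < x0" "0 < m" and margin: "\<And>z. z \<in> {c..p} \<Longrightarrow> m < H x0 - U z"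
    by (rule continuous_pos_on_Icc_extends_left[of "\<lambda>z. H x0 - U z" x0 p])
       (use x0 U_less_H[OF x0(1)] in \<open>auto intro!: continuous_intros\<close>)
  define X where "X = {H x0 - m<..}"
  have pos: "0 < h - U z" if "h \<in> X" "z \<in> {c..p}" for h z
    using margin[OF that(2)] that(1) by (simp add: X_def)
  show ?thesis
  proof (rule that)
    show "open X" "H x0 \<in> X" "c < x0"
      using \<open>0 < m\<close> \<open>c < x0\<close> by (auto simp: X_def)
    show "((\<lambda>(h, a). integral {a..p} (\<lambda>z. slowness (h - U z))) has_derivative
       (\<lambda>(dh, da). integral {x0..p} (\<lambda>z. - (1 / (2 * sqrt 2)) * (1 / (H x0 - U z) powr (3/2))) * dh
          - slowness (H x0 - U x0) * da))
     (at (H x0, x0) within X \<times> {c..p})"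
    proof (rule has_derivative_integral_lower_param)
      show "convex X" "H x0 \<in> X" "x0 \<in> {c..p}"
        using \<open>0 < m\<close> \<open>c < x0\<close> x0 by (auto simp: X_def)
      show "continuous_on (X \<times> {c..p}) (\<lambda>(h, z). slowness (h - U z))"
        unfolding split_beta' by (intro continuous_intros) (use pos in force)+
      show "continuous_on (X \<times> {c..p}) (\<lambda>(h, z). - (1 / (2 * sqrt 2)) * (1 / (h - U z) powr (3/2)))"
        unfolding split_beta' by (intro continuous_intros) (use pos in force)+
      show "((\<lambda>h. slowness (h - U z)) has_real_derivative
          - (1 / (2 * sqrt 2)) * (1 / (h - U z) powr (3/2))) (at h within X)"
        if "h \<in> X" "z \<in> {c..p}" for h z
      proof -
        have "((\<lambda>h. h - U z) has_real_derivative 1) (at h within X)"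
          by (auto intro!: derivative_eq_intros)
        from DERIV_chain2[OF slowness_has_real_derivative[OF pos[OF that]] this]
        show ?thesis
          by simp
      qed
    qed
  qed
qed

lemma transit_time_has_real_derivative:
  assumes x0: "x0 \<in> {0..min p 1}"
  shows "((\<lambda>x. transit_time x p) has_real_derivative - neg_transit_time_deriv x0 p)
    (at x0 within {0..min p 1})"
proof -
  have x0': "x0 \<in> {0..1}" "x0 \<le> p"
    using x0 by auto
  define I where "I = integral {x0..p} (\<lambda>z. - (1 / (2 * sqrt 2)) * (1 / (H x0 - U z) powr (3/2)))"
  obtain X c where "open X" "H x0 \<in> X" "c < x0" and
    "((\<lambda>(h, a). integral {a..p} (\<lambda>z. slowness (h - U z))) has_derivative
       (\<lambda>(dh, da). I * dh - slowness (H x0 - U x0) * da)) (at (H x0, x0) within X \<times> {c..p})"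
    using slowness_integral_has_derivative[OF x0'] unfolding I_def by blast
  moreover have "(H has_real_derivative v x0 * v' x0 - F x0) (at x0 within {0..min p 1})"
    by (rule has_field_derivative_subset[OF H_deriv[OF x0'(1)]]) auto
  ultimately have "((\<lambda>x. transit_time x p) has_derivative
      (\<lambda>t. I * ((v x0 * v' x0 - F x0) * t) - slowness (H x0 - U x0) * t)) (at x0 within {0..min p 1})"
    unfolding transit_time_def using has_derivative_compose_graph[where V = "{c<..}"] by fastforce
  moreover have "(\<lambda>t. I * ((v x0 * v' x0 - F x0) * t) - slowness (H x0 - U x0) * t) =
      (*) (- neg_transit_time_deriv x0 p)"
  proof -
    have "slowness (H x0 - U x0) = 1 / v x0"
      using v_pos[OF x0'(1)] by (simp add: slowness_def energy0_def)
    moreover have "I = - (1 / (2 * sqrt 2)) * integral {x0..p} (\<lambda>z. 1 / (H x0 - U z) powr (3/2))"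
      unfolding I_def by (rule integral_mult_right)
    ultimately show ?thesis
      by (auto simp: neg_transit_time_deriv_def algebra_simps)
  qed
  ultimately show ?thesis
    by (simp add: has_field_derivative_def)
qed

text \<open>The expression is affine in \<open>integral {x..p} (\<dots>)\<close>, which grows strictly with \<open>p\<close>;
  so it cannot vanish at some \<open>p\<close> without becoming negative further right.\<close>
lemma neg_transit_time_deriv_pos:
  assumes nonneg: "\<And>q. 0 < q \<Longrightarrow> x \<in> {0..min q 1} \<Longrightarrow> 0 \<le> neg_transit_time_deriv x q"
    and "0 < p" and x: "x \<in> {0..min p 1}"
  shows "0 < neg_transit_time_deriv x p"
proof (rule ccontr)
  assume "\<not> 0 < neg_transit_time_deriv x p"
  then have zero: "neg_transit_time_deriv x p = 0"
    using nonneg[OF \<open>0 < p\<close> x] by simp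
  have x': "x \<in> {0..1}" "x \<le> p"
    using x by auto
  define f where "f z = 1 / (H x - U z) powr (3/2)" for z
  define C where "C = (v x * v' x - F x) / (2 * sqrt 2)"
  have E: "neg_transit_time_deriv x q = 1 / v x + C * integral {x..q} f" for q
    unfolding neg_transit_time_deriv_def f_def C_def by simp
  have f_pos: "0 < f z" if "x \<le> z" for z
    using U_less_H[OF x'(1) that] by (simp add: f_def)
  have f_cont: "continuous_on {x..q} f" for q
    unfolding f_def by (intro continuous_intros) (use U_less_H[OF x'(1)] in force)+
  have "0 \<le> integral {x..p} f"
    by (rule integral_nonneg[OF integrable_continuous_real[OF f_cont]]) (auto intro: less_imp_le f_pos)
  then have "C < 0"
    using zero v_pos[OF x'(1)] unfolding E by (smt (verit) divide_pos_pos mult_nonneg_nonneg)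
  moreover have "0 < integral {p..p+1} f"
    by (rule integral_pos_if_continuous_pos)
       (use x' in \<open>auto intro: f_pos continuous_on_subset[OF f_cont[of "p+1"]]\<close>)
  moreover have "integral {x..p+1} f = integral {x..p} f + integral {p..p+1} f"
    using Henstock_Kurzweil_Integration.integral_combine[OF x'(2) _ integrable_continuous_real[OF f_cont]]
    by simp
  ultimately have "neg_transit_time_deriv x (p+1) < 0"
    using zero mult_neg_pos[of C "integral {p..p+1} f"] unfolding E by (simp add: distrib_left)
  then show False
    using nonneg[of "p+1"] \<open>0 < p\<close> x by fastforce
qed

lemma neg_transit_time_deriv_nonneg_if_decreasing:
  assumes "0 < p" and x: "x \<in> {0..min p 1}"
    and dec: "\<And>s t. s \<in> {0..min p 1} \<Longrightarrow> t \<in> {0..min p 1} \<Longrightarrow> s < t \<Longrightarrow>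
      transit_time t p < transit_time s p"
  shows "0 \<le> neg_transit_time_deriv x p"
proof -
  have "- neg_transit_time_deriv x p \<le> 0"
  proof (rule has_real_derivative_nonpos_if_antimono[OF _ x _ transit_time_has_real_derivative[OF x]])
    show "0 < min p 1"
      using \<open>0 < p\<close> by simp
    show "transit_time t p \<le> transit_time s p"
      if "s \<in> {0..min p 1}" "t \<in> {0..min p 1}" "s \<le> t" for s t
      using dec[OF that(1,2)] that(3) by (cases "s = t") auto
  qed
  then show ?thesis
    by simp
qed

lemma transit_time_less_if_neg_transit_time_deriv_pos:
  assumes pos: "\<And>s. s \<in> {x<..<x'} \<Longrightarrow> 0 < neg_transit_time_deriv s p"
    and sub: "{x..x'} \<subseteq> {0..min p 1}" and "x < x'"
  shows "transit_time x' p < transit_time x p"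
proof -
  have "- transit_time x p < - transit_time x' p"
  proof (rule has_real_derivative_pos_imp_less[OF \<open>x < x'\<close> _ pos])
    fix s assume "s \<in> {x..x'}"
    then have "s \<in> {0..min p 1}"
      using sub by blast
    from DERIV_minus[OF has_field_derivative_subset[OF transit_time_has_real_derivative[OF this] sub]]
    show "((\<lambda>s. - transit_time s p) has_real_derivative neg_transit_time_deriv s p) (at s within {x..x'})"
      by simp
  qed
  then show ?thesis
    by simp
qed

text \<open>Nonnegativity of \<open>neg_transit_time_deriv\<close> for all \<open>p\<close> already forces positivity
  (\<open>neg_transit_time_deriv_pos\<close>), so the zero set in the discreteness condition is empty.\<close>
lemma first_time_decreasing_iff_neg_transit_time_deriv:
  "(\<forall>p>0. \<forall>x\<in>{0..min p 1}. \<forall>x'\<in>{0..min p 1}. x < x' \<longrightarrow> first_time y x' p < first_time y x p)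
   \<longleftrightarrow> (\<forall>p>0. (\<forall>x\<in>{0..min p 1}. 0 \<le> neg_transit_time_deriv x p)
         \<and> discrete {x\<in>{0..min p 1}. neg_transit_time_deriv x p = 0})"
proof
  assume "\<forall>p>0. \<forall>x\<in>{0..min p 1}. \<forall>x'\<in>{0..min p 1}. x < x' \<longrightarrow>
    first_time y x' p < first_time y x p"
  then have nonneg: "0 \<le> neg_transit_time_deriv x p" if "0 < p" "x \<in> {0..min p 1}" for p x
    using that by (intro neg_transit_time_deriv_nonneg_if_decreasing) (auto simp: first_time_less_iff)
  have no_zero: "{x\<in>{0..min p 1}. neg_transit_time_deriv x p = 0} = {}" if "0 < p" for p
    using neg_transit_time_deriv_pos[OF nonneg that] by force
  show "\<forall>p>0. (\<forall>x\<in>{0..min p 1}. 0 \<le> neg_transit_time_deriv x p)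
      \<and> discrete {x\<in>{0..min p 1}. neg_transit_time_deriv x p = 0}"
  proof (intro allI impI conjI ballI)
    fix p x :: real
    assume "0 < p"
    then show "0 \<le> neg_transit_time_deriv x p" if "x \<in> {0..min p 1}"
      using nonneg that by blast
    show "discrete {x\<in>{0..min p 1}. neg_transit_time_deriv x p = 0}"
      unfolding no_zero[OF \<open>0 < p\<close>] by (simp add: discrete_def)
  qed
next
  assume "\<forall>p>0. (\<forall>x\<in>{0..min p 1}. 0 \<le> neg_transit_time_deriv x p)
    \<and> discrete {x\<in>{0..min p 1}. neg_transit_time_deriv x p = 0}"
  then have "0 < neg_transit_time_deriv x p" if "0 < p" "x \<in> {0..min p 1}" for p x
    using neg_transit_time_deriv_pos that by blast
  then have "transit_time x' p < transit_time x p"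
    if "0 < p" "x \<in> {0..min p 1}" "x' \<in> {0..min p 1}" "x < x'" for p x x'
    using that by (intro transit_time_less_if_neg_transit_time_deriv_pos) auto
  then show "\<forall>p>0. \<forall>x\<in>{0..min p 1}. \<forall>x'\<in>{0..min p 1}. x < x' \<longrightarrow>
      first_time y x' p < first_time y x p"
    by (simp add: first_time_less_iff)
qed

end

theorem theorem1:
  fixes F v v' :: "real \<Rightarrow> real"
    and y y' :: "real \<Rightarrow> real \<Rightarrow> real"
  assumes F_smooth: "smooth_on UNIV F"
    and v_smooth: "smooth_on {0..1} v"
    and v'_deriv: "\<And>x. x \<in> {0..1} \<Longrightarrow> (v has_real_derivative v' x) (at x within {0..1})"
    and y_init: "\<And>x. x \<in> {0..1} \<Longrightarrow> y 0 x = x"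
    and y'_init: "\<And>x. x \<in> {0..1} \<Longrightarrow> y' 0 x = v x"
    and y_deriv: "\<And>x t. x \<in> {0..1} \<Longrightarrow> 0 \<le> t \<Longrightarrow>
        ((\<lambda>s. y s x) has_real_derivative y' t x) (at t within {0..})"
    and y'_deriv: "\<And>x t. x \<in> {0..1} \<Longrightarrow> 0 \<le> t \<Longrightarrow>
        ((\<lambda>s. y' s x) has_real_derivative F (y t x)) (at t within {0..})"
    and v_pos: "\<And>x. x \<in> {0..1} \<Longrightarrow> v x > 0"
    and energy_pos: "\<And>x p. x \<in> {0..1} \<Longrightarrow> x \<le> p \<Longrightarrow> energy0 F v x - potU F p > 0"
  shows
   "((\<forall>t\<ge>0. \<forall>x\<in>{0..1}. \<forall>x'\<in>{0..1}. x \<noteq> x' \<longrightarrow> y t x \<noteq> y t x')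
     \<longleftrightarrow>
     (\<forall>p>0. \<forall>x\<in>{0..min p 1}. \<forall>x'\<in>{0..min p 1}. x < x' \<longrightarrow>
          first_time y x' p < first_time y x p))
   \<and>
    ((\<forall>p>0. \<forall>x\<in>{0..min p 1}. \<forall>x'\<in>{0..min p 1}. x < x' \<longrightarrow>
          first_time y x' p < first_time y x p)
     \<longleftrightarrow>
     (\<forall>p>0.
        (\<forall>x\<in>{0..min p 1}.
           1 / v x + (v x * v' x - F x) / (2 * sqrt 2) *
             integral {x..p} (\<lambda>z. 1 / (energy0 F v x - potU F z) powr (3/2)) \<ge> 0)
      \<and> discrete {x\<in>{0..min p 1}.
           1 / v x + (v x * v' x - F x) / (2 * sqrt 2) *
             integral {x..p} (\<lambda>z. 1 / (energy0 F v x - potU F z) powr (3/2)) = 0}))"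
proof -
  interpret particle_flow F v v' y y'
    by (unfold_locales; fact smooth_on_imp_continuous_on[OF F_smooth] assms)
  show ?thesis
    using no_collision_iff_first_time_decreasing first_time_decreasing_iff_neg_transit_time_deriv
    unfolding neg_transit_time_deriv_def by blast
qed

end
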